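(* Let $K$ be a commutative Noetherian ring with $1$, let $A$ be a $K$-algebra, and let $B$ be a $K$-subalgebra of $A$ such that $A/B$ is a finitely generated $K$-module. Then $B$ contains an ideal $I$ of $A$ such that $B/I$ is a finitely generated $K$-module (and hence $A/I$ is a finitely generated $K$-module as well).
   Context: A $K$-algebra is a structure that is simultaneously an associative ring (not necessarily with identity) and a $K$-module, with $K$-bilinear multiplication. *)

theory Defs
  imports Complex_Main
begin

definition noetherian_ring :: "'k::comm_ring_1 itself \<Rightarrow> bool" where
  "noetherian_ring _ \<longleftrightarrow>
     (\<forall>J::'k set. module.subspace (*) J \<longrightarrow> (\<exists>F. finite F \<and> module.span (*) F = J))"

text \<open>A K-algebra: an associative (not necessarily unital) ring A together with a
  K-module structure whose multiplication is K-bilinear.\<close>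
definition k_algebra :: "('k::comm_ring_1 \<Rightarrow> 'a::ring \<Rightarrow> 'a) \<Rightarrow> bool" where
  "k_algebra smul \<longleftrightarrow> module smul \<and>
     (\<forall>c x y. smul c (x * y) = smul c x * y \<and> smul c (x * y) = x * smul c y)"

definition k_subalgebra :: "('k::comm_ring_1 \<Rightarrow> 'a::ring \<Rightarrow> 'a) \<Rightarrow> 'a set \<Rightarrow> bool" where
  "k_subalgebra smul B \<longleftrightarrow> module.subspace smul B \<and> (\<forall>x\<in>B. \<forall>y\<in>B. x * y \<in> B)"

definition k_alg_ideal :: "('k::comm_ring_1 \<Rightarrow> 'a::ring \<Rightarrow> 'a) \<Rightarrow> 'a set \<Rightarrow> bool" where
  "k_alg_ideal smul I \<longleftrightarrow> module.subspace smul I \<and> (\<forall>a. \<forall>x\<in>I. a * x \<in> I \<and> x * a \<in> I)"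

text \<open>For submodules N \<subseteq> M, the quotient M/N is a finitely generated K-module iff there is a
  finite F \<subseteq> M with M \<subseteq> span F + N.\<close>
definition fg_quotient :: "('k::comm_ring_1 \<Rightarrow> 'a::ab_group_add \<Rightarrow> 'a) \<Rightarrow> 'a set \<Rightarrow> 'a set \<Rightarrow> bool" where
  "fg_quotient smul M N \<longleftrightarrow>
     (\<exists>F. finite F \<and> F \<subseteq> M \<and> (\<forall>m\<in>M. \<exists>s\<in>module.span smul F. \<exists>n\<in>N. m = s + n))"

end

theory Submission
  imports Defs
begin

text \<open>Choose a finite set F with A = span F + B. An element x of B generates an ideal contained
  in B as soon as u x, x u and u x v lie in B for all u, v in F, because multiplication is
  bilinear and B is closed under multiplication. So the largest ideal of A inside B consists of
  the x in B lying in the preimages of B under finitely many K-linear maps A \<rightarrow> A. Each such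
  preimage has finitely generated quotient in B: it is the kernel of a map from B into A/B, and
  submodules of the finitely generated module A/B are finitely generated since K is Noetherian.\<close>

lemma module_mult: "module ((*) :: 'k::comm_ring_1 \<Rightarrow> 'k \<Rightarrow> 'k)"
  by unfold_locales (auto simp: algebra_simps)

context module
begin

lemma fg_quotient_refl: "fg_quotient scale S S"
  unfolding fg_quotient_def by (rule exI[of _ "{}"]) force

lemma fg_quotient_trans:
  assumes "fg_quotient scale S T" "fg_quotient scale T U" "T \<subseteq> S"
  shows "fg_quotient scale S U"
proof -
  from assms(1) obtain F where F: "finite F" "F \<subseteq> S"
    "\<forall>m\<in>S. \<exists>s\<in>span F. \<exists>n\<in>T. m = s + n" unfolding fg_quotient_def by blast
  from assms(2) obtain G where G: "finite G" "G \<subseteq> T"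
    "\<forall>m\<in>T. \<exists>s\<in>span G. \<exists>n\<in>U. m = s + n" unfolding fg_quotient_def by blast
  show ?thesis unfolding fg_quotient_def
  proof (intro exI[of _ "F \<union> G"] conjI ballI)
    show "finite (F \<union> G)" "F \<union> G \<subseteq> S" using F G assms(3) by auto
    fix m assume "m \<in> S"
    then obtain s n where s: "s \<in> span F" "n \<in> T" "m = s + n" using F(3) by blast
    then obtain s' n' where s': "s' \<in> span G" "n' \<in> U" "n = s' + n'" using G(3) by blast
    have "s + s' \<in> span (F \<union> G)"
      using s(1) s'(1) span_mono[of F "F \<union> G"] span_mono[of G "F \<union> G"] by (blast intro: span_add)
    moreover have "m = (s + s') + n'" using s(3) s'(3) by (simp add: add.assoc)
    ultimately show "\<exists>s\<in>span (F \<union> G). \<exists>n\<in>U. m = s + n" using s'(2) by blast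
  qed
qed

lemma fg_quotient_UNIV_span:
  assumes "fg_quotient scale UNIV B"
  obtains F where "finite F" "span (F \<union> B) = UNIV"
proof -
  from assms obtain F where F: "finite F" "\<forall>m. \<exists>s\<in>span F. \<exists>n\<in>B. m = s + n"
    unfolding fg_quotient_def by blast
  have "m \<in> span (F \<union> B)" for m
  proof -
    obtain s n where "s \<in> span F" "n \<in> B" "m = s + n" using F(2) by blast
    then show ?thesis using span_mono[of F "F \<union> B"] by (auto intro: span_add span_base)
  qed
  then show thesis using that F(1) by blast
qed

lemma module_hom_span_subset:
  assumes "module_hom scale scale f" "subspace B" "f ` F \<subseteq> B"
  shows "f ` span F \<subseteq> B"
  using module_hom.span_image[OF assms(1)] span_minimal[OF assms(3,2)] by simp

lemma subspace_coefficient_ideal: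
  assumes f: "module_hom scale scale f" and N: "subspace N" and S: "subspace S"
  shows "module.subspace (*) {k. \<exists>s\<in>S. f s - k *s g \<in> N}"
proof (rule module.subspaceI[OF module_mult])
  interpret f: module_hom scale scale f by (rule f)
  show "0 \<in> {k. \<exists>s\<in>S. f s - k *s g \<in> N}"
    using subspace_0[OF S] subspace_0[OF N] by force
  fix x y c
  assume "x \<in> {k. \<exists>s\<in>S. f s - k *s g \<in> N}"
  then obtain s where s: "s \<in> S" "f s - x *s g \<in> N" by blast
  have "f (c *s s) - (c * x) *s g = c *s (f s - x *s g)"
    by (simp add: f.scale algebra_simps)
  then show "c * x \<in> {k. \<exists>s\<in>S. f s - k *s g \<in> N}"
    using s subspace_scale[OF S] subspace_scale[OF N] by (metis (mono_tags, lifting) mem_Collect_eq)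
  assume "y \<in> {k. \<exists>s\<in>S. f s - k *s g \<in> N}"
  then obtain s' where s': "s' \<in> S" "f s' - y *s g \<in> N" by blast
  have "f (s + s') - (x + y) *s g = (f s - x *s g) + (f s' - y *s g)"
    by (simp add: f.add algebra_simps)
  then show "x + y \<in> {k. \<exists>s\<in>S. f s - k *s g \<in> N}"
    using s s' subspace_add[OF S] subspace_add[OF N] by (metis (mono_tags, lifting) mem_Collect_eq)
qed

lemma fg_quotient_preimage_insert:
  assumes noeth: "noetherian_ring TYPE('a)" and f: "module_hom scale scale f"
    and N: "subspace N" and S: "subspace S"
  shows "fg_quotient scale {s\<in>S. f s \<in> span (insert g N)} {s\<in>S. f s \<in> N}"
proof -
  interpret f: module_hom scale scale f by (rule f)
  have span_insert_N: "x \<in> span (insert g N) \<longleftrightarrow> (\<exists>k. x - k *s g \<in> N)" for x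
    using N by (simp add: span_breakdown_eq span_eq_iff[THEN iffD2])
  txt \<open>Lifts of finitely many generators of the ideal of g-coefficients generate the quotient.\<close>
  define J where "J = {k. \<exists>s\<in>S. f s - k *s g \<in> N}"
  have "module.subspace (*) J" unfolding J_def by (rule subspace_coefficient_ideal[OF f N S])
  with noeth obtain H where H: "finite H" "module.span (*) H = J"
    unfolding noetherian_ring_def by blast
  have "\<forall>h\<in>H. \<exists>s. s \<in> S \<and> f s - h *s g \<in> N"
    using H(2) module.span_superset[OF module_mult, of H] unfolding J_def by blast
  then obtain sel where sel: "\<forall>h\<in>H. sel h \<in> S \<and> f (sel h) - h *s g \<in> N"
    by metis
  show ?thesis unfolding fg_quotient_def
  proof (intro exI[of _ "sel ` H"] conjI ballI)
    show "finite (sel ` H)" using H(1) by simp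
    show "sel ` H \<subseteq> {s\<in>S. f s \<in> span (insert g N)}" using sel span_insert_N by blast
    fix m assume "m \<in> {s\<in>S. f s \<in> span (insert g N)}"
    then obtain k where m: "m \<in> S" "f m - k *s g \<in> N" using span_insert_N by blast
    then have "k \<in> module.span (*) H" using H(2) unfolding J_def by blast
    then obtain c where c: "k = (\<Sum>h\<in>H. c h * h)"
      using module.span_finite[OF module_mult H(1)] by auto
    define v where "v = (\<Sum>h\<in>H. c h *s sel h)"
    have "f v - k *s g = (\<Sum>h\<in>H. c h *s (f (sel h) - h *s g))"
      by (simp add: v_def c f.sum f.scale scale_sum_left scale_right_diff_distrib sum_subtractf)
    also have "\<dots> \<in> N" using sel by (intro subspace_sum[OF N] subspace_scale[OF N]) auto
    finally have "f v - k *s g \<in> N" .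
    then have "f (m - v) \<in> N"
      using subspace_diff[OF N m(2)] by (metis diff_diff_eq2 diff_add_cancel f.diff)
    moreover have "v \<in> S" unfolding v_def
      using sel by (intro subspace_sum[OF S] subspace_scale[OF S]) auto
    moreover have "v \<in> span (sel ` H)" unfolding v_def
      by (intro span_sum span_scale span_base) auto
    ultimately show "\<exists>s\<in>span (sel ` H). \<exists>n\<in>{s\<in>S. f s \<in> N}. m = s + n"
      using subspace_diff[OF S m(1)] by (intro bexI[of _ v] bexI[of _ "m - v"]) auto
  qed
qed

lemma fg_quotient_preimage:
  assumes noeth: "noetherian_ring TYPE('a)" and f: "module_hom scale scale f"
    and "finite F"
  shows "subspace N \<Longrightarrow> subspace S \<Longrightarrow> f ` S \<subseteq> span (F \<union> N) \<Longrightarrow>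
    fg_quotient scale S {s\<in>S. f s \<in> N}"
  using \<open>finite F\<close>
proof (induction F arbitrary: N rule: finite_induct)
  case empty
  then have "{s\<in>S. f s \<in> N} = S" by (auto simp: span_eq_iff[THEN iffD2])
  then show ?case using fg_quotient_refl[of S] by simp
next
  case (insert g F)
  have "span (insert g F \<union> N) \<subseteq> span (F \<union> span (insert g N))"
    using span_superset[of "insert g N"] by (intro span_mono) auto
  then have "fg_quotient scale S {s\<in>S. f s \<in> span (insert g N)}"
    using insert by (meson order_trans subspace_span)
  moreover have "fg_quotient scale {s\<in>S. f s \<in> span (insert g N)} {s\<in>S. f s \<in> N}"
    using fg_quotient_preimage_insert[OF noeth f insert.prems(1,2)] .
  ultimately show ?case by (rule fg_quotient_trans) blast
qed

lemma fg_quotient_preimages: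
  assumes noeth: "noetherian_ring TYPE('a)" and N: "subspace N"
    and "finite F" and span_F: "span (F \<union> N) = UNIV" and "finite \<Phi>"
  shows "\<forall>\<phi>\<in>\<Phi>. module_hom scale scale \<phi> \<Longrightarrow> subspace S \<Longrightarrow>
    fg_quotient scale S {s\<in>S. \<forall>\<phi>\<in>\<Phi>. \<phi> s \<in> N}"
  using \<open>finite \<Phi>\<close>
proof (induction \<Phi> arbitrary: S rule: finite_induct)
  case empty
  then show ?case using fg_quotient_refl by simp
next
  case (insert \<phi> \<Phi>)
  have \<phi>: "module_hom scale scale \<phi>" using insert.prems(1) by simp
  let ?T = "{s\<in>S. \<phi> s \<in> N}"
  have "fg_quotient scale S ?T"
    using fg_quotient_preimage[OF noeth \<phi> \<open>finite F\<close> N insert.prems(2)] span_F by simp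
  moreover have "?T = S \<inter> {x. \<phi> x \<in> N}" by blast
  then have "subspace ?T"
    using subspace_inter[OF insert.prems(2) module_hom.subspace_linear_preimage[OF \<phi> N]] by simp
  then have "fg_quotient scale ?T {s\<in>?T. \<forall>\<psi>\<in>\<Phi>. \<psi> s \<in> N}"
    using insert.IH insert.prems(1) by blast
  moreover have "{s\<in>?T. \<forall>\<psi>\<in>\<Phi>. \<psi> s \<in> N} = {s\<in>S. \<forall>\<psi>\<in>insert \<phi> \<Phi>. \<psi> s \<in> N}" by auto
  ultimately show ?case using fg_quotient_trans[of S ?T] by auto
qed

end

lemma k_algebra_module: "k_algebra smul \<Longrightarrow> module smul"
  unfolding k_algebra_def by blast

lemma k_algebra_hom_mult_left:
  "k_algebra smul \<Longrightarrow> module_hom smul smul (\<lambda>x::'a::ring. a * x)"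
  unfolding k_algebra_def module_hom_iff by (metis distrib_left)

lemma k_algebra_hom_mult_right:
  "k_algebra smul \<Longrightarrow> module_hom smul smul (\<lambda>x::'a::ring. x * a)"
  unfolding k_algebra_def module_hom_iff by (metis distrib_right)

lemma k_algebra_hom_mult_both:
  "k_algebra smul \<Longrightarrow> module_hom smul smul (\<lambda>x::'a::ring. a * x * b)"
  using module_hom_compose[OF k_algebra_hom_mult_left k_algebra_hom_mult_right]
  by (simp add: o_def)

text \<open>The largest two-sided ideal contained in B. Since A need not have a unit, the condition
  on a * x * b does not follow from the two one-sided ones.\<close>

definition ideal_core :: "'a::ring set \<Rightarrow> 'a set" where
  "ideal_core B = {x\<in>B. \<forall>a b. a * x \<in> B \<and> x * a \<in> B \<and> a * x * b \<in> B}"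

lemma k_alg_ideal_ideal_core:
  assumes "k_algebra smul" "module.subspace smul B"
  shows "k_alg_ideal smul (ideal_core B)"
proof -
  interpret module smul using assms(1) by (rule k_algebra_module)
  have alg: "smul c (x * y) = smul c x * y" "smul c (x * y) = x * smul c y" for c x y
    using assms(1) unfolding k_algebra_def by blast+
  have "subspace (ideal_core B)"
    unfolding ideal_core_def using assms(2)
    by (intro subspaceI) (auto simp: subspace_0 subspace_add subspace_scale distrib_left
        distrib_right alg[symmetric])
  moreover have "a * x \<in> ideal_core B" "x * a \<in> ideal_core B" if "x \<in> ideal_core B" for a x
    using that unfolding ideal_core_def by (simp_all add: mult.assoc[symmetric]) (metis mult.assoc)
  ultimately show ?thesis unfolding k_alg_ideal_def by blast
qed

lemma ideal_core_eq_finite_tests: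
  assumes alg: "k_algebra smul" and B: "k_subalgebra smul B"
    and span_F: "module.span smul (F \<union> B) = UNIV"
  shows "ideal_core B = {x\<in>B. \<forall>u\<in>F. u * x \<in> B \<and> x * u \<in> B \<and> (\<forall>v\<in>F. u * x * v \<in> B)}"
proof
  interpret module smul using alg by (rule k_algebra_module)
  have Bs: "subspace B" and Bm: "\<And>x y. x \<in> B \<Longrightarrow> y \<in> B \<Longrightarrow> x * y \<in> B"
    using B unfolding k_subalgebra_def by blast+
  have extend: "\<phi> a \<in> B" if "module_hom smul smul \<phi>" "\<forall>u\<in>F \<union> B. \<phi> u \<in> B" for \<phi> a
  proof -
    have "\<phi> ` span (F \<union> B) \<subseteq> B"
      using module_hom_span_subset[OF that(1) Bs] that(2) by (simp add: image_subset_iff)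
    then show ?thesis using span_F by (simp add: image_subset_iff)
  qed
  show "ideal_core B \<subseteq> {x\<in>B. \<forall>u\<in>F. u * x \<in> B \<and> x * u \<in> B \<and> (\<forall>v\<in>F. u * x * v \<in> B)}"
    unfolding ideal_core_def by blast
  show "{x\<in>B. \<forall>u\<in>F. u * x \<in> B \<and> x * u \<in> B \<and> (\<forall>v\<in>F. u * x * v \<in> B)} \<subseteq> ideal_core B"
  proof
    fix x assume x: "x \<in> {x\<in>B. \<forall>u\<in>F. u * x \<in> B \<and> x * u \<in> B \<and> (\<forall>v\<in>F. u * x * v \<in> B)}"
    have left: "a * x \<in> B" for a
      by (rule extend[OF k_algebra_hom_mult_right[OF alg]]) (use x Bm in auto)
    have right: "x * a \<in> B" for a
      by (rule extend[OF k_algebra_hom_mult_left[OF alg]]) (use x Bm in auto)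
    have "a * (x * v) \<in> B" if "v \<in> F" for a v
      by (rule extend[OF k_algebra_hom_mult_right[OF alg]])
        (use x Bm right that in \<open>auto simp: mult.assoc\<close>)
    then have "a * x * b \<in> B" for a b
      by (intro extend[OF k_algebra_hom_mult_left[OF alg]])
        (use Bm[OF left] in \<open>auto simp: mult.assoc\<close>)
    then show "x \<in> ideal_core B" unfolding ideal_core_def using x left right by blast
  qed
qed

theorem lemma2p1:
  fixes smul :: "'k::comm_ring_1 \<Rightarrow> 'a::ring \<Rightarrow> 'a"
    and B :: "'a set"
  assumes "noetherian_ring TYPE('k)"
    and "k_algebra smul"
    and "k_subalgebra smul B"
    and "fg_quotient smul UNIV B"
  shows "\<exists>I. I \<subseteq> B \<and> k_alg_ideal smul I \<and> fg_quotient smul B I \<and> fg_quotient smul UNIV I"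
proof -
  interpret module smul using assms(2) by (rule k_algebra_module)
  have B: "subspace B" using assms(3) unfolding k_subalgebra_def by blast
  obtain F where F: "finite F" "span (F \<union> B) = UNIV"
    using fg_quotient_UNIV_span[OF assms(4)] by blast
  define \<Phi> where "\<Phi> = (\<lambda>u x. u * x) ` F \<union> (\<lambda>u x. x * u) ` F \<union> (\<lambda>(u, v) x. u * x * v) ` (F \<times> F)"
  have "finite \<Phi>" unfolding \<Phi>_def using F(1) by simp
  moreover have "\<forall>\<phi>\<in>\<Phi>. module_hom smul smul \<phi>"
    unfolding \<Phi>_def using assms(2)
    by (auto intro: k_algebra_hom_mult_left k_algebra_hom_mult_right k_algebra_hom_mult_both)
  ultimately have "fg_quotient smul B {x\<in>B. \<forall>\<phi>\<in>\<Phi>. \<phi> x \<in> B}"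
    using fg_quotient_preimages[OF assms(1) B F] B by blast
  also have "{x\<in>B. \<forall>\<phi>\<in>\<Phi>. \<phi> x \<in> B} = ideal_core B"
    unfolding ideal_core_eq_finite_tests[OF assms(2,3) F(2)] \<Phi>_def by auto
  finally have fg_core: "fg_quotient smul B (ideal_core B)" .
  moreover have "ideal_core B \<subseteq> B" unfolding ideal_core_def by blast
  ultimately show ?thesis
    using fg_quotient_trans[OF assms(4) fg_core] k_alg_ideal_ideal_core[OF assms(2) B] by blast
qed

end
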